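(* Let $X>0$ and let $w:[0,X]\to\mathbb{R}$ be a smooth function with $w''(x)\ge w(x)$ and $w(x)\ge0$ for all $x\in[0,X]$, and $w'(0)\ge0$. Let $p:[0,X]\to\mathbb{R}^+$ be an increasing integrable function. Then \[\int_0^Xw(x)\,dx\le\frac{2}{p(X/2)}\int_0^Xw(x)p(x)\,dx.\]
   Context: $\mathbb{R}^+$ denotes the positive reals. *)

theory Defs
  imports "HOL-Analysis.Analysis"
begin

definition smooth_on :: "real set \<Rightarrow> (real \<Rightarrow> real) \<Rightarrow> bool" where
  "smooth_on S f \<longleftrightarrow>
     (\<exists>D :: nat \<Rightarrow> real \<Rightarrow> real. D 0 = f \<and>
        (\<forall>n. \<forall>x\<in>S. (D n has_real_derivative D (Suc n) x) (at x within S)))"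

end

theory Submission
  imports Defs
begin

text \<open>The hypothesis \<open>w'' \<ge> w \<ge> 0\<close> makes \<open>w\<close> convex, and with \<open>w'(0) \<ge> 0\<close> also increasing.
  For an increasing \<open>w\<close> the upper half of \<open>[0, X]\<close> carries at least half of the integral, and there
  the increasing weight \<open>p\<close> is at least \<open>p(X/2)\<close>.\<close>

lemma mono_on_Icc_if_deriv_nonneg:
  fixes f f' :: "real \<Rightarrow> real"
  assumes deriv: "\<And>x. x \<in> {a..b} \<Longrightarrow> (f has_real_derivative f' x) (at x within {a..b})"
    and nonneg: "\<And>x. x \<in> {a..b} \<Longrightarrow> 0 \<le> f' x"
  shows "mono_on {a..b} f"
proof (rule mono_onI)
  fix r s assume rs: "r \<in> {a..b}" "s \<in> {a..b}" "r \<le> s"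
  have cont: "continuous_on {a..b} f"
    using deriv continuous_on_eq_continuous_within DERIV_continuous by blast
  show "f r \<le> f s"
  proof (rule DERIV_nonneg_imp_increasing_open[OF \<open>r \<le> s\<close>])
    show "\<exists>y. (f has_real_derivative y) (at x) \<and> 0 \<le> y" if "r < x" "x < s" for x
      using deriv[of x] nonneg[of x] that rs at_within_Icc_at[of a x b] by force
    show "continuous_on {r..s} f"
      using continuous_on_subset[OF cont] rs by auto
  qed
qed

lemma mono_on_Icc_if_deriv2_nonneg:
  fixes f f' f'' :: "real \<Rightarrow> real"
  assumes deriv: "\<And>x. x \<in> {a..b} \<Longrightarrow> (f has_real_derivative f' x) (at x within {a..b})"
    and deriv2: "\<And>x. x \<in> {a..b} \<Longrightarrow> (f' has_real_derivative f'' x) (at x within {a..b})"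
    and convex: "\<And>x. x \<in> {a..b} \<Longrightarrow> 0 \<le> f'' x"
    and start: "0 \<le> f' a"
  shows "mono_on {a..b} f"
proof (rule mono_on_Icc_if_deriv_nonneg[OF deriv])
  fix x assume x: "x \<in> {a..b}"
  have "f' a \<le> f' x"
    using mono_onD[OF mono_on_Icc_if_deriv_nonneg[OF deriv2 convex]] x by auto
  with start show "0 \<le> f' x" by linarith
qed

lemma integral_le_twice_integral_upper_half:
  fixes f :: "real \<Rightarrow> real"
  assumes mono: "mono_on {a..b} f" and "a \<le> b"
  defines "m \<equiv> (a + b) / 2"
  shows "integral {a..b} f \<le> 2 * integral {m..b} f"
proof -
  have m: "a \<le> m" "m \<le> b" "b = m + (m - a)"
    using \<open>a \<le> b\<close> by (auto simp: m_def field_simps)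
  have split: "integral {a..b} f = integral {a..m} f + integral {m..b} f"
    using Henstock_Kurzweil_Integration.integral_combine[where a=a and c=m and b=b and f=f]
      m(1,2) integrable_on_mono_on[OF mono]
    by simp
  have shift: "integral {m..b} f = integral {a..m} (\<lambda>x. f (x + (m - a)))"
    using integral_shift_Icc_real[of a m f "m - a"] m by (simp add: comp_def add.commute)
  have "integral {a..m} f \<le> integral {a..m} (\<lambda>x. f (x + (m - a)))"
  proof (rule integral_le)
    show "f integrable_on {a..m}"
      using integrable_on_mono_on mono_on_subset[OF mono] m by auto
    show "(\<lambda>x. f (x + (m - a))) integrable_on {a..m}"
      by (rule integrable_on_mono_on) (use m in \<open>auto intro!: mono_onI mono_onD[OF mono]\<close>)
    show "f x \<le> f (x + (m - a))" if "x \<in> {a..m}" for x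
      using that m by (auto intro!: mono_onD[OF mono])
  qed
  then show ?thesis
    using split shift by linarith
qed

lemma integral_le_twice_weighted_integral:
  fixes f p :: "real \<Rightarrow> real"
  assumes f_mono: "mono_on {a..b} f" and f_nonneg: "\<And>x. x \<in> {a..b} \<Longrightarrow> 0 \<le> f x"
    and p_mono: "mono_on {a..b} p" and p_pos: "\<And>x. x \<in> {a..b} \<Longrightarrow> 0 < p x"
    and "a \<le> b"
  defines "m \<equiv> (a + b) / 2"
  shows "integral {a..b} f \<le> 2 / p m * integral {a..b} (\<lambda>x. f x * p x)"
proof -
  have m: "a \<le> m" "m \<le> b"
    using \<open>a \<le> b\<close> by (auto simp: m_def)
  have fp_mono: "mono_on {a..b} (\<lambda>x. f x * p x)"
  proof (rule mono_onI)
    fix r s assume rs: "r \<in> {a..b}" "s \<in> {a..b}" "r \<le> s"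
    show "f r * p r \<le> f s * p s"
      using rs mono_onD[OF f_mono rs] mono_onD[OF p_mono rs] f_nonneg[of r] p_pos[of r]
      by (intro mult_mono) auto
  qed
  have fp_split: "integral {a..b} (\<lambda>x. f x * p x)
      = integral {a..m} (\<lambda>x. f x * p x) + integral {m..b} (\<lambda>x. f x * p x)"
    using Henstock_Kurzweil_Integration.integral_combine[where a=a and c=m and b=b
        and f="\<lambda>x. f x * p x"] m integrable_on_mono_on[OF fp_mono]
    by simp
  have lower_nonneg: "0 \<le> integral {a..m} (\<lambda>x. f x * p x)"
  proof (rule integral_nonneg)
    show "(\<lambda>x. f x * p x) integrable_on {a..m}"
      using integrable_on_mono_on[OF mono_on_subset[OF fp_mono]] m by auto
    show "0 \<le> f x * p x" if "x \<in> {a..m}" for x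
      using that m f_nonneg[of x] p_pos[of x] by simp
  qed
  have upper: "p m * integral {m..b} f \<le> integral {m..b} (\<lambda>x. f x * p x)"
  proof -
    have "integral {m..b} (\<lambda>x. p m * f x) \<le> integral {m..b} (\<lambda>x. f x * p x)"
    proof (rule integral_le)
      have "f integrable_on {m..b}"
        using integrable_on_mono_on[OF mono_on_subset[OF f_mono]] m by auto
      then show "(\<lambda>x. p m * f x) integrable_on {m..b}"
        using integrable_on_cmult_left[of f "{m..b}" "p m"] by simp
      show "(\<lambda>x. f x * p x) integrable_on {m..b}"
        using integrable_on_mono_on[OF mono_on_subset[OF fp_mono]] m by auto
      show "p m * f x \<le> f x * p x" if "x \<in> {m..b}" for x
        using that m f_nonneg[of x] mono_onD[OF p_mono, of m x]
        by (auto simp: mult.commute intro: mult_left_mono)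
    qed
    then show ?thesis by simp
  qed
  have pm: "0 < p m"
    using p_pos m by auto
  have "integral {a..b} f \<le> 2 * integral {m..b} f"
    using integral_le_twice_integral_upper_half[OF f_mono \<open>a \<le> b\<close>] by (simp add: m_def)
  also have "\<dots> \<le> 2 / p m * integral {m..b} (\<lambda>x. f x * p x)"
    using upper pm by (simp add: field_simps)
  also have "\<dots> \<le> 2 / p m * integral {a..b} (\<lambda>x. f x * p x)"
    using fp_split lower_nonneg pm by (simp add: field_simps)
  finally show ?thesis .
qed

theorem proposition5p5:
  fixes X :: real and w w' w'' p :: "real \<Rightarrow> real"
  assumes X_pos: "X > 0"
    and smooth: "smooth_on {0..X} w"
    and w_deriv: "\<And>x. x \<in> {0..X} \<Longrightarrow> (w has_real_derivative w' x) (at x within {0..X})"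
    and w'_deriv: "\<And>x. x \<in> {0..X} \<Longrightarrow> (w' has_real_derivative w'' x) (at x within {0..X})"
    and ineq: "\<And>x. x \<in> {0..X} \<Longrightarrow> w'' x \<ge> w x"
    and nonneg: "\<And>x. x \<in> {0..X} \<Longrightarrow> w x \<ge> 0"
    and w'0: "w' 0 \<ge> 0"
    and p_pos: "\<And>x. x \<in> {0..X} \<Longrightarrow> p x > 0"
    and p_mono: "mono_on {0..X} p"
    and p_int: "p integrable_on {0..X}"
  shows "integral {0..X} w \<le> 2 / p (X / 2) * integral {0..X} (\<lambda>x. w x * p x)"
proof -
  have "mono_on {0..X} w"
  proof (rule mono_on_Icc_if_deriv2_nonneg[OF w_deriv w'_deriv _ w'0])
    show "0 \<le> w'' x" if "x \<in> {0..X}" for x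
      using ineq[OF that] nonneg[OF that] by linarith
  qed
  from integral_le_twice_weighted_integral[OF this nonneg p_mono p_pos] X_pos
  show ?thesis by simp
qed

end
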